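(* Let $\Lambda\subset\mathbb{R}^d$ be a $d$-dimensional lattice and let $V_\Lambda=\{x\in\mathbb{R}^d: |x|\le|x-a|\ \forall a\in\Lambda\}$ be its Voronoi cell. Then $V_\Lambda$ is lattice complete with respect to $\Lambda$ and its polar body $(V_\Lambda)^\star=\{y: x\cdot y\le 1\ \forall x\in V_\Lambda\}$ is lattice reduced with respect to $\Lambda^\star$.
   Context: A lattice $\Lambda\subset\mathbb{R}^d$ is a discrete subgroup spanning $\mathbb{R}^d$; $\Lambda^\star=\{y: x\cdot y\in\mathbb{Z}\ \forall x\in\Lambda\}$. For a convex body $K$ (compact convex, non-empty interior) and lattice $\Gamma$: $\mathrm{wdt}_\Gamma(K)=\min_{y\in\Gamma^\star\setminus\{0\}}\max_{a,b\in K}y\cdot(a-b)$; a segment $[a,b]$ is a lattice segment if $b-a$ is parallel to a nonzero vector of $\Gamma$, with lattice length $|b-a|/|v|$ where $v$ generates $\Gamma\cap\mathrm{span}\{b-a\}$ and is a positive multiple of $b-a$; $\mathrm{diam}_\Gamma(K)$ is the maximal lattice length of a lattice segment in $K$. $K$ is lattice reduced w.r.t. $\Gamma$ if no convex body $K'\subsetneq K$ has the same lattice width; lattice complete if no convex body $K'\supsetneq K$ has the same lattice diameter. *)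

theory Defs
  imports "HOL-Analysis.Analysis"
begin

definition is_lattice :: "'a::euclidean_space set \<Rightarrow> bool" where
  "is_lattice L \<longleftrightarrow> 0 \<in> L \<and> (\<forall>x\<in>L. \<forall>y\<in>L. x + y \<in> L) \<and> (\<forall>x\<in>L. - x \<in> L)
     \<and> discrete L \<and> span L = UNIV"

definition dual_lattice :: "'a::euclidean_space set \<Rightarrow> 'a set" where
  "dual_lattice L = {y. \<forall>x\<in>L. x \<bullet> y \<in> \<int>}"

definition convex_body :: "'a::euclidean_space set \<Rightarrow> bool" where
  "convex_body K \<longleftrightarrow> compact K \<and> convex K \<and> interior K \<noteq> {}"

definition lattice_width :: "'a::euclidean_space set \<Rightarrow> 'a set \<Rightarrow> real" where
  "lattice_width G K =
     (INF y \<in> dual_lattice G - {0}. SUP p \<in> K \<times> K. y \<bullet> (fst p - snd p))"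

definition lattice_segment :: "'a::euclidean_space set \<Rightarrow> 'a \<Rightarrow> 'a \<Rightarrow> bool" where
  "lattice_segment G a b \<longleftrightarrow> (\<exists>v\<in>G. v \<noteq> 0 \<and> (\<exists>t::real. b - a = t *\<^sub>R v))"

text \<open>Lattice length |b-a|/|v|, v the primitive lattice vector in direction b-a
  (equivalently the nonzero lattice vector of least norm on the line through 0 and b-a).\<close>
definition lattice_length :: "'a::euclidean_space set \<Rightarrow> 'a \<Rightarrow> 'a \<Rightarrow> real" where
  "lattice_length G a b =
     norm (b - a) / Inf {norm v | v. v \<in> G \<and> v \<noteq> 0 \<and> (\<exists>t::real. v = t *\<^sub>R (b - a))}"

definition lattice_diameter :: "'a::euclidean_space set \<Rightarrow> 'a set \<Rightarrow> real" where
  "lattice_diameter G K =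
     Sup {lattice_length G a b | a b. a \<in> K \<and> b \<in> K \<and> lattice_segment G a b}"

definition lattice_reduced :: "'a::euclidean_space set \<Rightarrow> 'a set \<Rightarrow> bool" where
  "lattice_reduced G K \<longleftrightarrow> convex_body K \<and>
     \<not> (\<exists>K'. convex_body K' \<and> K' \<subset> K \<and> lattice_width G K' = lattice_width G K)"

definition lattice_complete :: "'a::euclidean_space set \<Rightarrow> 'a set \<Rightarrow> bool" where
  "lattice_complete G K \<longleftrightarrow> convex_body K \<and>
     \<not> (\<exists>K'. convex_body K' \<and> K \<subset> K' \<and> lattice_diameter G K' = lattice_diameter G K)"

definition voronoi_cell :: "'a::euclidean_space set \<Rightarrow> 'a set" where
  "voronoi_cell L = {x. \<forall>a\<in>L. norm x \<le> norm (x - a)}"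

definition polar_body :: "'a::euclidean_space set \<Rightarrow> 'a set" where
  "polar_body K = {y. \<forall>x\<in>K. x \<bullet> y \<le> 1}"

end

theory Submission
  imports Defs
begin

text \<open>
  Let V be the Voronoi cell of L, the intersection of the half-spaces 2 (x \<bullet> a) \<le> a \<bullet> a for
  a \<in> L. If x, y \<in> V and y - x = t v with v \<in> L, the half-spaces of v and -v give |t| \<le> 1, so V
  has lattice diameter at most one. A convex body K strictly containing V has an interior point p
  outside V; for a lattice point a nearest to p we have p - a \<in> V, and the segment from p - a to a
  point of K slightly beyond p in direction a has lattice length greater than one.

  The polar body V* is the convex hull of 0 and the points 2a/|a|^2, a \<in> L - {0}. The pair
  \<plusminus>2a/|a|^2 shows that V* has width at least 4 in every direction a \<in> L, and L is the dual of
  its dual lattice (by the existence of an integral basis), so V* has lattice width at least 4.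
  Every extreme point of V* is 2a/|a|^2 for an a with a \<bullet> b < b \<bullet> b for all other nonzero b \<in> L;
  then V contains a neighbourhood of a/2 in the bisector hyperplane of a, which makes 2a/|a|^2 the
  unique maximiser of x \<bullet> a on V*. A convex body strictly inside V* misses an extreme point
  (Krein-Milman), and its width in the corresponding direction a is less than 4.
\<close>

section \<open>Integer spans\<close>

definition int_span :: "'a::real_vector set \<Rightarrow> 'a set" where
  "int_span G = range (\<lambda>m. \<Sum>g\<in>G. of_int (m g) *\<^sub>R g)"

lemma int_span_subset_span: "int_span G \<subseteq> span G"
  unfolding int_span_def by (auto intro!: span_sum intro: span_scale span_base)

lemma int_span_insertI:
  assumes "finite G" "g \<notin> G" "z \<in> int_span G"
  shows "of_int n *\<^sub>R g + z \<in> int_span (insert g G)"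
proof -
  obtain m where z: "z = (\<Sum>h\<in>G. of_int (m h) *\<^sub>R h)"
    using assms(3) unfolding int_span_def by blast
  have "(\<Sum>h\<in>G. of_int ((m(g := n)) h) *\<^sub>R h) = z"
    unfolding z using assms(2) by (intro sum.cong) auto
  then have "of_int n *\<^sub>R g + z = (\<Sum>h\<in>insert g G. of_int ((m(g := n)) h) *\<^sub>R h)"
    using assms(1,2) by simp
  then show ?thesis unfolding int_span_def by blast
qed

lemma int_span_near:
  fixes v :: "'a::real_normed_vector"
  assumes "finite G" "v \<in> span G"
  obtains z where "z \<in> int_span G" "norm (v - z) \<le> (\<Sum>g\<in>G. norm g)"
proof -
  obtain r where r: "v = (\<Sum>g\<in>G. r g *\<^sub>R g)"
    using assms span_finite[of G] by auto
  define z where "z = (\<Sum>g\<in>G. of_int \<lfloor>r g\<rfloor> *\<^sub>R g)"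
  have "v - z = (\<Sum>g\<in>G. (r g - of_int \<lfloor>r g\<rfloor>) *\<^sub>R g)"
    unfolding r z_def by (simp add: scaleR_diff_left sum_subtractf)
  also have "norm \<dots> \<le> (\<Sum>g\<in>G. norm ((r g - of_int \<lfloor>r g\<rfloor>) *\<^sub>R g))"
    by (rule norm_sum)
  also have "\<dots> \<le> (\<Sum>g\<in>G. norm g)"
  proof (rule sum_mono)
    fix g
    have "\<bar>r g - of_int \<lfloor>r g\<rfloor>\<bar> \<le> 1"
      using of_int_floor_le[of "r g"] real_of_int_floor_add_one_gt[of "r g"] by linarith
    then show "norm ((r g - of_int \<lfloor>r g\<rfloor>) *\<^sub>R g) \<le> norm g"
      by (simp add: mult_left_le_one_le)
  qed
  finally have "norm (v - z) \<le> (\<Sum>g\<in>G. norm g)" .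
  moreover have "z \<in> int_span G"
    unfolding int_span_def z_def by (rule range_eqI[where x="\<lambda>g. \<lfloor>r g\<rfloor>"]) simp
  ultimately show ?thesis using that by blast
qed

lemma unique_coeff_mod_span:
  assumes "b \<notin> span S" "x - k *\<^sub>R b \<in> span S" "x - k' *\<^sub>R b \<in> span S"
  shows "k = k'"
proof (rule ccontr)
  assume "k \<noteq> k'"
  have "(x - k' *\<^sub>R b) - (x - k *\<^sub>R b) \<in> span S"
    using assms(2,3) span_diff by blast
  then have "(k - k') *\<^sub>R b \<in> span S"
    by (simp add: algebra_simps)
  then have "(1 / (k - k')) *\<^sub>R ((k - k') *\<^sub>R b) \<in> span S"
    by (rule span_scale)
  then show False using \<open>k \<noteq> k'\<close> assms(1) by simp
qed

lemma span_insert_scaleR: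
  assumes "c \<noteq> 0"
  shows "span (insert (c *\<^sub>R a) S) = span (insert a S)"
  unfolding span_insert
proof safe
  fix x k assume "x - k *\<^sub>R c *\<^sub>R a \<in> span S"
  then show "\<exists>k. x - k *\<^sub>R a \<in> span S" by (metis scaleR_scaleR)
next
  fix x k assume "x - k *\<^sub>R a \<in> span S"
  then show "\<exists>k. x - k *\<^sub>R c *\<^sub>R a \<in> span S"
    using assms by (metis scaleR_scaleR nonzero_divide_eq_eq)
qed

lemma exists_dual_vector:
  fixes G :: "'a::euclidean_space set"
  assumes "independent G" "h \<in> G"
  obtains w where "\<And>g. g \<in> G \<Longrightarrow> g \<bullet> w = (if g = h then 1 else 0)"
proof -
  obtain f :: "'a \<Rightarrow> real" where f: "linear f" "\<And>g. g \<in> G \<Longrightarrow> f g = (if g = h then 1 else 0)"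
    using linear_independent_extend[OF assms(1), of "\<lambda>g. if g = h then 1 else 0"] by blast
  have adjoint: "g \<bullet> adjoint f 1 = f g" for g
    using adjoint_works[OF f(1), of g 1] by simp
  show ?thesis
  proof (rule that)
    fix g assume "g \<in> G"
    then show "g \<bullet> adjoint f 1 = (if g = h then 1 else 0)"
      by (simp only: adjoint f(2))
  qed
qed

lemma inner_sum_dual_vector:
  assumes "finite G" "h \<in> G" "\<And>g. g \<in> G \<Longrightarrow> g \<bullet> w = (if g = h then 1 else 0)"
  shows "(\<Sum>g\<in>G. c g *\<^sub>R g) \<bullet> w = c h"
proof -
  have "(\<Sum>g\<in>G. c g *\<^sub>R g) \<bullet> w = (\<Sum>g\<in>G. c g * (g \<bullet> w))"
    by (simp add: inner_sum_left)
  also have "\<dots> = (\<Sum>g\<in>G. if g = h then c g else 0)"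
    using assms(3) by (intro sum.cong) auto
  also have "\<dots> = c h"
    using assms(1,2) by simp
  finally show ?thesis .
qed

section \<open>Discrete subgroups and lattices\<close>

locale discrete_subgroup =
  fixes L :: "'a::euclidean_space set"
  assumes zero_mem [simp]: "0 \<in> L"
    and add_mem: "x \<in> L \<Longrightarrow> y \<in> L \<Longrightarrow> x + y \<in> L"
    and uminus_mem: "x \<in> L \<Longrightarrow> - x \<in> L"
    and discrete: "discrete L"

locale euclidean_lattice = discrete_subgroup +
  assumes span_eq_UNIV: "span L = UNIV"

lemma euclidean_lattice_iff_is_lattice: "euclidean_lattice L \<longleftrightarrow> is_lattice L"
  unfolding euclidean_lattice_def euclidean_lattice_axioms_def discrete_subgroup_def is_lattice_def
  by blast

context discrete_subgroup
begin

lemma diff_mem: "x \<in> L \<Longrightarrow> y \<in> L \<Longrightarrow> x - y \<in> L"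
  using add_mem[of x "- y"] uminus_mem[of y] by simp

lemma of_int_scaleR_mem:
  assumes "x \<in> L"
  shows "of_int k *\<^sub>R x \<in> L"
proof -
  have nat: "of_nat n *\<^sub>R x \<in> L" for n
    by (induction n) (auto simp: algebra_simps intro: add_mem assms)
  show ?thesis
    using nat[of "nat k"] uminus_mem[OF nat[of "nat (- k)"]] by (cases "k \<ge> 0") simp_all
qed

lemma int_span_subset:
  assumes "finite G" "G \<subseteq> L"
  shows "int_span G \<subseteq> L"
proof -
  have "(\<Sum>g\<in>G. of_int (m g) *\<^sub>R g) \<in> L" for m
    using assms by (induction G rule: finite_induct) (auto intro: add_mem of_int_scaleR_mem)
  then show ?thesis unfolding int_span_def by blast
qed

lemma norm_lower_bound: "\<exists>e>0. \<forall>x\<in>L. x \<noteq> 0 \<longrightarrow> e \<le> norm x"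
proof -
  have "0 isolated_in L" using discrete by (simp add: discrete_def)
  then obtain e where e: "e > 0" "\<And>y. y \<in> L \<Longrightarrow> dist 0 y < e \<Longrightarrow> y = 0"
    by (metis isolated_inE_dist)
  have "e \<le> norm x" if "x \<in> L" "x \<noteq> 0" for x
    using e(2)[OF that(1)] that(2) by (metis dist_0_norm not_le)
  then show ?thesis using e(1) by blast
qed

lemma uniform_discrete_L: "uniform_discrete L"
proof -
  obtain e where e: "e > 0" "\<forall>x\<in>L. x \<noteq> 0 \<longrightarrow> e \<le> norm x"
    using norm_lower_bound by blast
  show ?thesis
  proof (rule uniformI2[OF e(1)])
    fix x y assume "x \<in> L" "y \<in> L" "x \<noteq> y"
    then show "e \<le> dist x y" using e(2) diff_mem[of x y] by (auto simp: dist_norm)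
  qed
qed

lemma closed_L: "closed L"
  using uniform_discrete_L uniform_discrete_imp_closed by blast

lemma finite_Int_bounded: "bounded S \<Longrightarrow> finite (L \<inter> S)"
  using uniform_discrete_finite_iff[of "L \<inter> S"] uniform_discrete_L
  by (meson bounded_subset inf_le1 inf_le2 uniform_discrete_subset)

lemma finite_coeffs_mod_span:
  assumes "finite G" "G \<subseteq> L" "b \<in> L" "b \<notin> span G"
  shows "finite {k \<in> {0<..1}. \<exists>x\<in>L. x - k *\<^sub>R b \<in> span G}"
proof -
  define C where "C = norm b + (\<Sum>g\<in>G. norm g)"
  define offset where "offset x = (THE k. x - k *\<^sub>R b \<in> span G)" for x
  have "{k \<in> {0<..1}. \<exists>x\<in>L. x - k *\<^sub>R b \<in> span G} \<subseteq> offset ` (L \<inter> cball 0 C)"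
  proof
    fix k assume "k \<in> {k \<in> {0<..1}. \<exists>x\<in>L. x - k *\<^sub>R b \<in> span G}"
    then obtain x where k: "0 < k" "k \<le> 1" and x: "x \<in> L" "x - k *\<^sub>R b \<in> span G"
      by auto
    obtain z where z: "z \<in> int_span G" "norm (x - k *\<^sub>R b - z) \<le> (\<Sum>g\<in>G. norm g)"
      using int_span_near[OF assms(1) x(2)] by blast
    have "x - z \<in> L"
      using diff_mem x(1) int_span_subset[OF assms(1,2)] z(1) by blast
    moreover have "norm (x - z) \<le> C"
    proof -
      have "norm (x - z) \<le> norm (k *\<^sub>R b) + norm (x - k *\<^sub>R b - z)"
        using norm_triangle_ineq[of "k *\<^sub>R b" "x - k *\<^sub>R b - z"] by simp
      moreover have "norm (k *\<^sub>R b) \<le> norm b"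
        using k by (simp add: mult_left_le_one_le)
      ultimately show ?thesis using z(2) unfolding C_def by linarith
    qed
    moreover have "offset (x - z) = k"
    proof -
      have kz: "x - z - k *\<^sub>R b \<in> span G"
        using span_diff[OF x(2) subsetD[OF int_span_subset_span z(1)]] by (simp add: algebra_simps)
      from kz unique_coeff_mod_span[OF assms(4) _ kz] show ?thesis
        unfolding offset_def by (rule the_equality)
    qed
    ultimately show "k \<in> offset ` (L \<inter> cball 0 C)"
      by (intro image_eqI[of _ _ "x - z"]) auto
  qed
  moreover have "finite (L \<inter> cball 0 C)" by (rule finite_Int_bounded) simp
  ultimately show ?thesis by (rule finite_surj[rotated])
qed

lemma int_span_insert_if_min_coeff:
  assumes G: "finite G" "L \<inter> span G \<subseteq> int_span G"
    and g: "g \<in> L" "g \<notin> span G" "g - \<delta> *\<^sub>R b \<in> span G" "0 < \<delta>"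
    and min: "\<And>x h. x \<in> L \<Longrightarrow> x - h *\<^sub>R b \<in> span G \<Longrightarrow> 0 < h \<Longrightarrow> h < \<delta> \<Longrightarrow> False"
  shows "L \<inter> span (insert b G) \<subseteq> int_span (insert g G)"
proof
  fix x assume "x \<in> L \<inter> span (insert b G)"
  then obtain k where x: "x \<in> L" "x - k *\<^sub>R b \<in> span G"
    using span_breakdown_eq by blast
  define n where "n = \<lfloor>k / \<delta>\<rfloor>"
  define h where "h = k - of_int n * \<delta>"
  have "of_int n \<le> k / \<delta>" "k / \<delta> < of_int n + 1"
    unfolding n_def by linarith+
  then have h: "0 \<le> h" "h < \<delta>"
    unfolding h_def using g(4) by (simp_all add: field_simps)
  have "x - of_int n *\<^sub>R g \<in> L"
    using x(1) g(1) by (intro diff_mem of_int_scaleR_mem)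
  moreover have "(x - of_int n *\<^sub>R g) - h *\<^sub>R b \<in> span G"
  proof -
    have "(x - of_int n *\<^sub>R g) - h *\<^sub>R b = (x - k *\<^sub>R b) - of_int n *\<^sub>R (g - \<delta> *\<^sub>R b)"
      unfolding h_def by (simp add: algebra_simps)
    also have "\<dots> \<in> span G"
      by (rule span_diff[OF x(2) span_scale[OF g(3)]])
    finally show ?thesis .
  qed
  moreover from calculation have "h = 0"
    using min h by force
  ultimately have "x - of_int n *\<^sub>R g \<in> int_span G"
    using G(2) by auto
  then have "of_int n *\<^sub>R g + (x - of_int n *\<^sub>R g) \<in> int_span (insert g G)"
    using g(2) span_base by (intro int_span_insertI[OF G(1)]) blast+
  then show "x \<in> int_span (insert g G)" by simp
qed

lemma int_basis_insert:
  assumes G: "finite G" "G \<subseteq> L" "L \<inter> span G \<subseteq> int_span G"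
    and b: "b \<in> L" "b \<notin> span G"
  obtains g where "g \<in> L" "g \<notin> span G" "span (insert g G) = span (insert b G)"
    "L \<inter> span (insert b G) \<subseteq> int_span (insert g G)"
proof -
  \<comment> \<open>Take for g a lattice point whose coefficient of b modulo span G is the least positive one.\<close>
  define K where "K = {k \<in> {0<..1}. \<exists>x\<in>L. x - k *\<^sub>R b \<in> span G}"
  have "1 \<in> K" unfolding K_def using b(1) by (auto intro!: bexI[of _ b] simp: span_zero)
  moreover have "finite K" unfolding K_def by (rule finite_coeffs_mod_span[OF G(1,2) b])
  ultimately have "Min K \<in> K" and Min_le: "\<And>k. k \<in> K \<Longrightarrow> Min K \<le> k"
    by (metis Min_in empty_iff, simp)
  define \<delta> where "\<delta> = Min K"
  obtain g where g: "g \<in> L" "g - \<delta> *\<^sub>R b \<in> span G" and \<delta>: "0 < \<delta>" "\<delta> \<le> 1"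
    using \<open>Min K \<in> K\<close> unfolding K_def \<delta>_def by auto
  have g_notin: "g \<notin> span G"
    using unique_coeff_mod_span[OF b(2) g(2), of 0] \<delta>(1) by auto
  have "span (insert g G) = span (insert b G)"
    using eq_span_insert_eq[OF g(2)] span_insert_scaleR[of \<delta> b G] \<delta>(1) by simp
  moreover have "L \<inter> span (insert b G) \<subseteq> int_span (insert g G)"
  proof (rule int_span_insert_if_min_coeff[OF G(1,3) g(1) g_notin g(2) \<delta>(1)])
    fix x h assume "x \<in> L" "x - h *\<^sub>R b \<in> span G" "0 < h" "h < \<delta>"
    then have "h \<in> K" unfolding K_def using \<delta>(2) by auto
    then show False using Min_le \<open>h < \<delta>\<close> unfolding \<delta>_def by fastforce
  qed
  ultimately show ?thesis using that g(1) g_notin by blast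
qed

lemma exists_int_basis:
  assumes "finite B" "independent B" "B \<subseteq> L"
  shows "\<exists>G. finite G \<and> G \<subseteq> L \<and> independent G \<and> span G = span B \<and> L \<inter> span B \<subseteq> int_span G"
  using assms
proof (induction B rule: finite_induct)
  case empty
  show ?case by (intro exI[of _ "{}"]) (auto simp: int_span_def independent_empty)
next
  case (insert b B)
  then have "independent B" "b \<notin> span B" "b \<in> L" "B \<subseteq> L"
    by (auto simp: independent_insert)
  then obtain G where G: "finite G" "G \<subseteq> L" "independent G" "span G = span B"
    "L \<inter> span B \<subseteq> int_span G"
    using insert.IH by blast
  obtain g where g: "g \<in> L" "g \<notin> span G" "span (insert g G) = span (insert b G)"
    "L \<inter> span (insert b G) \<subseteq> int_span (insert g G)"
    using int_basis_insert[OF G(1,2)] G(4,5) \<open>b \<in> L\<close> \<open>b \<notin> span B\<close> by metis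
  have "independent (insert g G)"
    using independent_insertI g(2) G(3) by blast
  moreover have "span (insert b G) = span (insert b B)"
    by (simp only: span_insert G(4))
  ultimately show ?case
    using G g by (intro exI[of _ "insert g G"]) auto
qed

end

context euclidean_lattice
begin

lemma exists_lattice_basis:
  obtains G where "finite G" "G \<subseteq> L" "independent G" "span G = UNIV" "L = int_span G"
proof -
  obtain B where B: "B \<subseteq> L" "independent B" "L \<subseteq> span B"
    using maximal_independent_subset[of L] by blast
  have "span B = UNIV"
    using span_mono[OF B(3)] span_eq_UNIV by (simp add: span_span top.extremum_unique)
  then obtain G where "finite G" "G \<subseteq> L" "independent G" "span G = UNIV" "L \<subseteq> int_span G"
    using exists_int_basis[OF finiteI_independent[OF B(2)] B(2) B(1)] by auto
  then show ?thesis using that int_span_subset by blast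
qed

lemma dual_lattice_dual_lattice: "dual_lattice (dual_lattice L) = L"
proof
  show "L \<subseteq> dual_lattice (dual_lattice L)"
    unfolding dual_lattice_def by (auto simp: inner_commute)
next
  obtain G where G: "finite G" "independent G" "span G = UNIV" "L = int_span G"
    using exists_lattice_basis by metis
  show "dual_lattice (dual_lattice L) \<subseteq> L"
  proof
    fix y assume y: "y \<in> dual_lattice (dual_lattice L)"
    obtain r where r: "y = (\<Sum>g\<in>G. r g *\<^sub>R g)"
      using span_finite[OF G(1)] G(3) by auto
    have "r h \<in> \<int>" if h: "h \<in> G" for h
    proof -
      obtain w where w: "\<And>g. g \<in> G \<Longrightarrow> g \<bullet> w = (if g = h then 1 else 0)"
        using exists_dual_vector[OF G(2) h] by blast
      have "w \<in> dual_lattice L"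
        unfolding dual_lattice_def G(4) int_span_def
        using inner_sum_dual_vector[OF G(1) h w] by auto
      then have "y \<bullet> w \<in> \<int>"
        using y unfolding dual_lattice_def by (auto simp: inner_commute)
      then show ?thesis
        using inner_sum_dual_vector[OF G(1) h w] r by simp
    qed
    then have "y = (\<Sum>g\<in>G. of_int \<lfloor>r g\<rfloor> *\<^sub>R g)"
      unfolding r by (intro sum.cong) (auto elim!: Ints_cases)
    then show "y \<in> L"
      unfolding G(4) int_span_def by (rule range_eqI[where x="\<lambda>g. \<lfloor>r g\<rfloor>"])
  qed
qed

lemma exists_nonzero: "\<exists>a\<in>L. a \<noteq> 0"
proof (rule ccontr)
  assume "\<not> ?thesis"
  then have "span L \<subseteq> {0}"
    using span_mono[of L "{0}"] by auto
  moreover obtain i :: 'a where "i \<in> Basis"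
    using nonempty_Basis by blast
  ultimately show False
    using span_eq_UNIV nonzero_Basis by auto
qed

end

section \<open>Lattice completeness of the Voronoi cell\<close>

lemma bounded_inner_bounded_spanning:
  fixes B :: "'a::euclidean_space set"
  assumes "finite B" "span B = UNIV"
  shows "bounded {x. \<forall>b\<in>B. \<bar>x \<bullet> b\<bar> \<le> c b}"
proof -
  have "\<forall>i\<in>Basis. \<exists>u. i = (\<Sum>b\<in>B. u b *\<^sub>R b)"
    using span_finite[OF assms(1)] assms(2) by auto
  then obtain u where u: "\<And>i. i \<in> Basis \<Longrightarrow> i = (\<Sum>b\<in>B. u i b *\<^sub>R b)"
    by metis
  have "norm x \<le> (\<Sum>i\<in>Basis. \<Sum>b\<in>B. \<bar>u i b\<bar> * c b)" if x: "\<forall>b\<in>B. \<bar>x \<bullet> b\<bar> \<le> c b" for x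
  proof -
    have "norm x \<le> (\<Sum>i\<in>Basis. \<bar>x \<bullet> i\<bar>)" by (rule norm_le_l1)
    also have "\<dots> \<le> (\<Sum>i\<in>Basis. \<Sum>b\<in>B. \<bar>u i b\<bar> * c b)"
    proof (rule sum_mono)
      fix i :: 'a assume i: "i \<in> Basis"
      have "\<bar>x \<bullet> i\<bar> = \<bar>\<Sum>b\<in>B. u i b * (x \<bullet> b)\<bar>"
        by (subst u[OF i]) (simp add: inner_sum_right)
      also have "\<dots> \<le> (\<Sum>b\<in>B. \<bar>u i b\<bar> * \<bar>x \<bullet> b\<bar>)"
        by (rule order_trans[OF sum_abs]) (simp add: abs_mult)
      also have "\<dots> \<le> (\<Sum>b\<in>B. \<bar>u i b\<bar> * c b)"
        using x by (intro sum_mono mult_left_mono) auto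
      finally show "\<bar>x \<bullet> i\<bar> \<le> (\<Sum>b\<in>B. \<bar>u i b\<bar> * c b)" .
    qed
    finally show ?thesis .
  qed
  then show ?thesis unfolding bounded_iff by blast
qed

lemma mem_voronoi_cell_iff: "x \<in> voronoi_cell L \<longleftrightarrow> (\<forall>a\<in>L. 2 * (x \<bullet> a) \<le> a \<bullet> a)"
proof -
  have "norm x \<le> norm (x - a) \<longleftrightarrow> 2 * (x \<bullet> a) \<le> a \<bullet> a" for a
    by (simp add: norm_le inner_diff_left inner_diff_right inner_commute)
  then show ?thesis unfolding voronoi_cell_def by blast
qed

lemma zero_mem_voronoi_cell: "0 \<in> voronoi_cell L"
  by (simp add: mem_voronoi_cell_iff)

lemma voronoi_cell_eq_Inter: "voronoi_cell L = (\<Inter>a\<in>L. {x. (2 *\<^sub>R a) \<bullet> x \<le> a \<bullet> a})"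
  by (auto simp: mem_voronoi_cell_iff inner_commute)

lemma closed_voronoi_cell: "closed (voronoi_cell L)"
  unfolding voronoi_cell_eq_Inter by (intro closed_INT ballI closed_halfspace_le)

lemma convex_voronoi_cell: "convex (voronoi_cell L)"
  unfolding voronoi_cell_eq_Inter by (intro convex_INT ballI convex_halfspace_le)

lemma inner_diff_voronoi_cell_le:
  assumes "x \<in> voronoi_cell L" "y \<in> voronoi_cell L" "w \<in> L" "- w \<in> L"
  shows "(x - y) \<bullet> w \<le> w \<bullet> w"
proof -
  have "2 * (x \<bullet> w) \<le> w \<bullet> w" "2 * (y \<bullet> - w) \<le> (- w) \<bullet> (- w)"
    using assms unfolding mem_voronoi_cell_iff by blast+
  then show ?thesis by (simp add: inner_diff_left)
qed

lemma lattice_length_le_divide: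
  assumes "lattice_segment L a b" "0 < c"
    and "\<And>v t. v \<in> L \<Longrightarrow> v \<noteq> 0 \<Longrightarrow> v = t *\<^sub>R (b - a) \<Longrightarrow> c \<le> norm v"
  shows "lattice_length L a b \<le> norm (b - a) / c"
proof (cases "a = b")
  case True
  then show ?thesis by (simp add: lattice_length_def)
next
  case False
  define T where "T = {norm v | v. v \<in> L \<and> v \<noteq> 0 \<and> (\<exists>t::real. v = t *\<^sub>R (b - a))}"
  obtain v t where v: "v \<in> L" "v \<noteq> 0" "b - a = t *\<^sub>R v"
    using assms(1) unfolding lattice_segment_def by blast
  with False have "v = (1 / t) *\<^sub>R (b - a)"
    by auto
  with v have "norm v \<in> T"
    unfolding T_def by blast
  then have "c \<le> Inf T"
    using assms(3) unfolding T_def by (intro cInf_greatest) auto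
  then show ?thesis
    unfolding lattice_length_def T_def[symmetric] using assms(2) by (intro divide_left_mono) auto
qed

lemma lattice_length_le_one:
  assumes "lattice_segment L a b"
    and "\<And>v t. v \<in> L \<Longrightarrow> v \<noteq> 0 \<Longrightarrow> v = t *\<^sub>R (b - a) \<Longrightarrow> norm (b - a) \<le> norm v"
  shows "lattice_length L a b \<le> 1"
proof (cases "a = b")
  case True
  then show ?thesis by (simp add: lattice_length_def)
next
  case False
  then have "lattice_length L a b \<le> norm (b - a) / norm (b - a)"
    using assms by (intro lattice_length_le_divide) auto
  then show ?thesis using False by simp
qed

context discrete_subgroup
begin

lemma uminus_mem_voronoi_cell: "x \<in> voronoi_cell L \<Longrightarrow> - x \<in> voronoi_cell L"
  using uminus_mem by (fastforce simp: mem_voronoi_cell_iff)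

lemma zero_mem_interior_voronoi_cell: "0 \<in> interior (voronoi_cell L)"
proof -
  obtain e where e: "e > 0" "\<forall>x\<in>L. x \<noteq> 0 \<longrightarrow> e \<le> norm x"
    using norm_lower_bound by blast
  have "2 * (x \<bullet> a) \<le> a \<bullet> a" if "norm x < e / 2" "a \<in> L" for x a
  proof (cases "a = 0")
    case False
    have "2 * (x \<bullet> a) \<le> 2 * norm x * norm a"
      using norm_cauchy_schwarz[of x a] by simp
    also have "\<dots> \<le> e * norm a"
      using that(1) by (intro mult_right_mono) auto
    also have "\<dots> \<le> norm a * norm a"
      using e False that(2) by (intro mult_right_mono) auto
    finally show ?thesis by (simp add: dot_square_norm power2_eq_square)
  qed simp
  then have "ball 0 (e / 2) \<subseteq> voronoi_cell L"
    by (auto simp: mem_voronoi_cell_iff)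
  then show ?thesis
    using e(1) by (meson centre_in_ball half_gt_zero interior_maximal open_ball subsetD)
qed

lemma exists_lattice_translate_voronoi_cell: "\<exists>a\<in>L. p - a \<in> voronoi_cell L"
proof -
  obtain a where a: "a \<in> L" "\<And>y. y \<in> L \<Longrightarrow> dist p a \<le> dist p y"
    using distance_attains_inf[OF closed_L, of p] ex_in_conv zero_mem by metis
  have "norm (p - a) \<le> norm (p - a - c)" if "c \<in> L" for c
    using a(2)[OF add_mem[OF a(1) that]] by (simp add: dist_norm algebra_simps)
  then show ?thesis using a(1) unfolding voronoi_cell_def by blast
qed

lemma bdd_above_lattice_lengths:
  assumes "bounded K"
  shows "bdd_above {lattice_length L a b | a b. a \<in> K \<and> b \<in> K \<and> lattice_segment L a b}"
proof -
  obtain e where e: "e > 0" "\<forall>x\<in>L. x \<noteq> 0 \<longrightarrow> e \<le> norm x"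
    using norm_lower_bound by blast
  obtain R where R: "\<forall>x\<in>K. norm x \<le> R"
    using assms bounded_iff by blast
  have "lattice_length L a b \<le> 2 * R / e"
    if "a \<in> K" "b \<in> K" "lattice_segment L a b" for a b
  proof -
    have "lattice_length L a b \<le> norm (b - a) / e"
      using e by (intro lattice_length_le_divide[OF that(3)]) auto
    also have "\<dots> \<le> 2 * R / e"
    proof -
      have "norm a \<le> R" "norm b \<le> R"
        using R that(1,2) by auto
      then have "norm (b - a) \<le> 2 * R"
        using norm_triangle_ineq4[of b a] by linarith
      then show ?thesis using e(1) by (simp add: divide_right_mono)
    qed
    finally show ?thesis .
  qed
  then show ?thesis by (intro bdd_aboveI[of _ "2 * R / e"]) auto
qed

lemma lattice_length_ge:
  assumes "v \<in> L" "v \<noteq> 0" "b - a = c *\<^sub>R v" "0 < c"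
  shows "c \<le> lattice_length L a b"
proof -
  obtain e where e: "e > 0" "\<forall>x\<in>L. x \<noteq> 0 \<longrightarrow> e \<le> norm x"
    using norm_lower_bound by blast
  define T where "T = {norm v | v. v \<in> L \<and> v \<noteq> 0 \<and> (\<exists>t::real. v = t *\<^sub>R (b - a))}"
  have "norm v \<in> T"
    unfolding T_def using assms by (auto intro!: exI[of _ "1 / c"])
  then have "Inf T \<le> norm v" "e \<le> Inf T"
    using e unfolding T_def by (auto intro!: cInf_lower cInf_greatest bdd_belowI[of _ 0])
  then have "c * norm v / norm v \<le> c * norm v / Inf T"
    using e(1) assms(2,4) by (intro divide_left_mono) auto
  then show ?thesis
    unfolding lattice_length_def T_def[symmetric] using assms by simp
qed

lemma lattice_length_voronoi_cell_le_one:
  assumes "a \<in> voronoi_cell L" "b \<in> voronoi_cell L" "lattice_segment L a b"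
  shows "lattice_length L a b \<le> 1"
proof (rule lattice_length_le_one[OF assms(3)])
  fix v t assume v: "v \<in> L" "v \<noteq> 0" "v = t *\<^sub>R (b - a)"
  define \<mu> where "\<mu> = 1 / t"
  have ba: "b - a = \<mu> *\<^sub>R v"
    using v unfolding \<mu>_def by auto
  have "\<bar>(b - a) \<bullet> v\<bar> \<le> v \<bullet> v"
    using inner_diff_voronoi_cell_le[OF assms(2,1) v(1) uminus_mem[OF v(1)]]
      inner_diff_voronoi_cell_le[OF assms(2,1) uminus_mem[OF v(1)]] v(1)
    by (simp add: abs_le_iff)
  then have "\<bar>\<mu>\<bar> * (v \<bullet> v) \<le> 1 * (v \<bullet> v)"
    unfolding ba by (simp add: abs_mult)
  then have "\<bar>\<mu>\<bar> \<le> 1"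
    by (rule mult_right_le_imp_le) (use v(2) in simp)
  then show "norm (b - a) \<le> norm v"
    unfolding ba by (simp add: mult_left_le_one_le)
qed

end

lemma interior_convex_body_not_subset:
  assumes "convex_body K" "closed C" "C \<subset> K"
  obtains p where "p \<in> interior K" "p \<notin> C"
proof -
  have "closure (interior K) = K"
    using assms(1) convex_closure_interior unfolding convex_body_def
    by (metis closure_closed compact_imp_closed)
  then have "\<not> interior K \<subseteq> C"
    using assms(2,3) closure_minimal by blast
  then show ?thesis using that by blast
qed

context euclidean_lattice
begin

lemma bounded_voronoi_cell: "bounded (voronoi_cell L)"
proof -
  obtain G where G: "finite G" "G \<subseteq> L" "span G = UNIV"
    using exists_lattice_basis by metis
  have "\<bar>x \<bullet> b\<bar> \<le> b \<bullet> b" if "x \<in> voronoi_cell L" "b \<in> G" for x b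
  proof -
    have "b \<in> L" "- b \<in> L"
      using that(2) G(2) uminus_mem by auto
    then have "2 * (x \<bullet> b) \<le> b \<bullet> b" "2 * (x \<bullet> - b) \<le> (- b) \<bullet> (- b)"
      using that(1) unfolding mem_voronoi_cell_iff by blast+
    then show ?thesis by (simp add: abs_le_iff)
  qed
  then have "voronoi_cell L \<subseteq> {x. \<forall>b\<in>G. \<bar>x \<bullet> b\<bar> \<le> b \<bullet> b}"
    by blast
  then show ?thesis
    by (rule bounded_subset[OF bounded_inner_bounded_spanning[OF G(1,3)]])
qed

lemma convex_body_voronoi_cell: "convex_body (voronoi_cell L)"
  unfolding convex_body_def compact_eq_bounded_closed
  using bounded_voronoi_cell closed_voronoi_cell convex_voronoi_cell zero_mem_interior_voronoi_cell
  by auto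

lemma lattice_diameter_voronoi_cell_le_one: "lattice_diameter L (voronoi_cell L) \<le> 1"
  unfolding lattice_diameter_def
proof (rule cSup_least)
  obtain v where "v \<in> L" "v \<noteq> 0"
    using exists_nonzero by blast
  then have "lattice_segment L 0 0"
    unfolding lattice_segment_def by auto
  then show "{lattice_length L a b |a b. a \<in> voronoi_cell L \<and> b \<in> voronoi_cell L \<and>
      lattice_segment L a b} \<noteq> {}"
    using zero_mem_voronoi_cell by blast
qed (auto intro: lattice_length_voronoi_cell_le_one)

lemma lattice_diameter_gt_one_if_psupset:
  assumes K: "convex_body K" "voronoi_cell L \<subset> K"
  shows "1 < lattice_diameter L K"
proof -
  obtain p where p: "p \<in> interior K" "p \<notin> voronoi_cell L"
    using interior_convex_body_not_subset[OF K(1) closed_voronoi_cell K(2)] by blast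
  then obtain \<epsilon> where \<epsilon>: "\<epsilon> > 0" "ball p \<epsilon> \<subseteq> K"
    using mem_interior by blast
  obtain a where a: "a \<in> L" "p - a \<in> voronoi_cell L"
    using exists_lattice_translate_voronoi_cell by blast
  with p(2) have "a \<noteq> 0" by auto
  define q where "q = p + (\<epsilon> / (2 * norm a)) *\<^sub>R a"
  define c where "c = 1 + \<epsilon> / (2 * norm a)"
  have "q \<in> K"
    using \<epsilon> \<open>a \<noteq> 0\<close> unfolding q_def by (intro subsetD[OF \<epsilon>(2)]) (simp add: dist_norm)
  moreover have "p - a \<in> K"
    using a(2) K(2) by auto
  moreover have "q - (p - a) = c *\<^sub>R a"
    unfolding q_def c_def by (simp add: algebra_simps)
  moreover have "1 < c"
    unfolding c_def using \<epsilon>(1) \<open>a \<noteq> 0\<close> by simp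
  ultimately have "lattice_segment L (p - a) q" "1 < lattice_length L (p - a) q"
    using a(1) \<open>a \<noteq> 0\<close> lattice_length_ge[of a q "p - a" c]
    unfolding lattice_segment_def by (auto intro!: bexI[of _ a])
  moreover have "lattice_length L (p - a) q \<le> lattice_diameter L K"
    unfolding lattice_diameter_def
  proof (rule cSup_upper)
    show "bdd_above {lattice_length L a b |a b. a \<in> K \<and> b \<in> K \<and> lattice_segment L a b}"
      using K(1) unfolding convex_body_def by (intro bdd_above_lattice_lengths compact_imp_bounded) simp
    show "lattice_length L (p - a) q
        \<in> {lattice_length L a b |a b. a \<in> K \<and> b \<in> K \<and> lattice_segment L a b}"
      using \<open>q \<in> K\<close> \<open>p - a \<in> K\<close> \<open>lattice_segment L (p - a) q\<close> by blast
  qed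
  ultimately show ?thesis by linarith
qed

lemma lattice_complete_voronoi_cell: "lattice_complete L (voronoi_cell L)"
  unfolding lattice_complete_def
proof (intro conjI notI convex_body_voronoi_cell)
  assume "\<exists>K. convex_body K \<and> voronoi_cell L \<subset> K
    \<and> lattice_diameter L K = lattice_diameter L (voronoi_cell L)"
  then obtain K where "convex_body K" "voronoi_cell L \<subset> K"
    "lattice_diameter L K = lattice_diameter L (voronoi_cell L)"
    by blast
  then show False
    using lattice_diameter_gt_one_if_psupset lattice_diameter_voronoi_cell_le_one by fastforce
qed

end

section \<open>Lattice reducedness of the polar body of the Voronoi cell\<close>

lemma polar_body_eq_Inter: "polar_body K = (\<Inter>x\<in>K. {y. x \<bullet> y \<le> 1})"
  unfolding polar_body_def by auto

lemma closed_polar_body: "closed (polar_body K)"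
  unfolding polar_body_eq_Inter by (intro closed_INT ballI closed_halfspace_le)

lemma convex_polar_body: "convex (polar_body K)"
  unfolding polar_body_eq_Inter by (intro convex_INT ballI convex_halfspace_le)

lemma zero_mem_polar_body: "0 \<in> polar_body K"
  unfolding polar_body_def by simp

lemma uminus_mem_polar_body:
  assumes "\<And>x. x \<in> K \<Longrightarrow> - x \<in> K" "y \<in> polar_body K"
  shows "- y \<in> polar_body K"
proof -
  have "x \<bullet> - y \<le> 1" if "x \<in> K" for x
  proof -
    have "(- x) \<bullet> y \<le> 1"
      using assms(2) assms(1)[OF that] unfolding polar_body_def by blast
    then show ?thesis by simp
  qed
  then show ?thesis unfolding polar_body_def by blast
qed

lemma polar_body_subset_cball:
  assumes "r > 0" "ball 0 r \<subseteq> K"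
  shows "polar_body K \<subseteq> cball 0 (2 / r)"
proof
  fix y :: 'a assume y: "y \<in> polar_body K"
  show "y \<in> cball 0 (2 / r)"
  proof (cases "y = 0")
    case False
    define x where "x = (r / 2 / norm y) *\<^sub>R y"
    have "x \<in> K"
      using assms False unfolding x_def by (intro subsetD[OF assms(2)]) simp
    then have "x \<bullet> y \<le> 1"
      using y unfolding polar_body_def by blast
    moreover have "x \<bullet> y = r / 2 * norm y"
      unfolding x_def using False by (simp add: dot_square_norm power2_eq_square)
    ultimately show ?thesis
      using assms(1) by (simp add: field_simps)
  qed (use assms(1) in simp)
qed

lemma ball_subset_polar_body:
  assumes "R > 0" "K \<subseteq> cball 0 R"
  shows "ball 0 (1 / R) \<subseteq> polar_body K"
proof
  fix y :: 'a assume "y \<in> ball 0 (1 / R)"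
  then have "norm y \<le> 1 / R" by simp
  have "x \<bullet> y \<le> 1" if "x \<in> K" for x
  proof -
    have "x \<bullet> y \<le> norm x * norm y" by (rule norm_cauchy_schwarz)
    also have "\<dots> \<le> R * (1 / R)"
      using assms that \<open>norm y \<le> 1 / R\<close> by (intro mult_mono) auto
    finally show ?thesis using assms(1) by simp
  qed
  then show "y \<in> polar_body K" unfolding polar_body_def by blast
qed

lemma convex_body_polar_body:
  fixes K :: "'a::euclidean_space set"
  assumes "bounded K" "0 \<in> interior K"
  shows "convex_body (polar_body K)"
proof -
  obtain r where "r > 0" "ball 0 r \<subseteq> K"
    using assms(2) mem_interior by blast
  then have "bounded (polar_body K)"
    using polar_body_subset_cball bounded_cball bounded_subset by metis
  moreover obtain R where "R > 0" "K \<subseteq> cball 0 R"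
    using assms(1) bounded_pos mem_cball_0 subset_iff by metis
  then have "0 \<in> interior (polar_body K)"
    using ball_subset_polar_body
    by (meson centre_in_ball interior_maximal open_ball subsetD divide_pos_pos zero_less_one)
  ultimately show ?thesis
    unfolding convex_body_def compact_eq_bounded_closed
    using closed_polar_body convex_polar_body by auto
qed

definition polar_vertex :: "'a::real_inner \<Rightarrow> 'a" where
  "polar_vertex a = (2 / (a \<bullet> a)) *\<^sub>R a"

lemma inner_polar_vertex: "x \<bullet> polar_vertex a = 2 * (x \<bullet> a) / (a \<bullet> a)"
  unfolding polar_vertex_def by simp

lemma norm_polar_vertex: "a \<noteq> 0 \<Longrightarrow> norm (polar_vertex a) = 2 / norm a"
  for a :: "'a::real_inner"
  unfolding polar_vertex_def by (simp add: dot_square_norm power2_eq_square)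

lemma polar_vertex_polar_vertex: "polar_vertex (polar_vertex a) = a"
  for a :: "'a::real_inner"
proof (cases "a = 0")
  case False
  then have "polar_vertex a \<bullet> polar_vertex a = 4 / (a \<bullet> a)"
    unfolding polar_vertex_def by (simp add: power2_eq_square)
  with False show ?thesis
    unfolding polar_vertex_def[of "polar_vertex a"] by (simp add: polar_vertex_def)
qed (simp add: polar_vertex_def)

lemma mem_voronoi_cell_iff_polar_vertex:
  "x \<in> voronoi_cell L \<longleftrightarrow> (\<forall>a\<in>L - {0}. x \<bullet> polar_vertex a \<le> 1)"
proof -
  have iff: "2 * (x \<bullet> a) \<le> a \<bullet> a \<longleftrightarrow> x \<bullet> polar_vertex a \<le> 1" if "a \<noteq> 0" for a
    using that by (simp add: inner_polar_vertex)
  show ?thesis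
    unfolding mem_voronoi_cell_iff
  proof (intro iffI ballI)
    fix a assume "\<forall>a\<in>L. 2 * (x \<bullet> a) \<le> a \<bullet> a" "a \<in> L - {0}"
    then show "x \<bullet> polar_vertex a \<le> 1" using iff by blast
  next
    fix a assume "\<forall>a\<in>L - {0}. x \<bullet> polar_vertex a \<le> 1" "a \<in> L"
    then show "2 * (x \<bullet> a) \<le> a \<bullet> a" using iff by (cases "a = 0") auto
  qed
qed

lemma polar_vertex_mem_polar_body_voronoi_cell:
  assumes "a \<in> L" "a \<noteq> 0"
  shows "polar_vertex a \<in> polar_body (voronoi_cell L)"
  using assms unfolding polar_body_def by (auto simp: mem_voronoi_cell_iff_polar_vertex)

lemma extreme_point_mem_convex_hull_subset:
  assumes "convex S" "x extreme_point_of S" "T \<subseteq> S" "x \<in> convex hull T"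
  shows "x \<in> T"
proof (rule ccontr)
  assume "x \<notin> T"
  then have "convex hull T \<subseteq> S - {x}"
    using assms(1-3) extreme_point_of_stillconvex by (metis hull_minimal insert_Diff subset_insert)
  then show False using assms(4) by blast
qed

lemma zero_not_extreme_point_of_symmetric:
  assumes "\<And>x. x \<in> S \<Longrightarrow> - x \<in> S" "x \<in> S" "x \<noteq> 0"
  shows "\<not> 0 extreme_point_of S"
proof -
  have "x \<noteq> - x"
    using assms(3) by (simp add: eq_neg_iff_add_eq_0 flip: scaleR_2)
  then have "0 \<in> open_segment x (- x)"
    using midpoint_in_open_segment[of x "- x"] by (simp add: midpoint_def)
  then show ?thesis
    using assms unfolding extreme_point_of_def by blast
qed

lemma finite_positive_lower_bound:
  fixes f :: "'b \<Rightarrow> real"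
  assumes "finite F" "\<And>b. b \<in> F \<Longrightarrow> 0 < f b"
  obtains \<delta> where "\<delta> > 0" "\<And>b. b \<in> F \<Longrightarrow> \<delta> \<le> f b"
proof
  show "0 < Min (insert 1 (f ` F))"
    using assms by auto
  show "Min (insert 1 (f ` F)) \<le> f b" if "b \<in> F" for b
    using assms(1) that by auto
qed

lemma bdd_above_inner_diff:
  fixes K :: "'a::real_inner set"
  assumes "bounded K"
  shows "bdd_above ((\<lambda>p. y \<bullet> (fst p - snd p)) ` (K \<times> K))"
proof -
  obtain R where R: "\<And>x. x \<in> K \<Longrightarrow> norm x \<le> R"
    using assms bounded_iff by blast
  have "y \<bullet> (p - q) \<le> norm y * (2 * R)" if "p \<in> K" "q \<in> K" for p q
  proof -
    have "norm (p - q) \<le> 2 * R"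
      using R[OF that(1)] R[OF that(2)] norm_triangle_ineq4[of p q] by linarith
    then have "norm y * norm (p - q) \<le> norm y * (2 * R)"
      by (intro mult_left_mono) auto
    then show ?thesis using norm_cauchy_schwarz[of y "p - q"] by linarith
  qed
  then show ?thesis by (intro bdd_aboveI[of _ "norm y * (2 * R)"]) auto
qed

lemma inner_add_le_if_norm_le:
  fixes a b w :: "'a::real_inner"
  assumes "norm a + 2 * norm w \<le> norm b"
  shows "a \<bullet> b + 2 * (w \<bullet> b) \<le> b \<bullet> b"
proof -
  have "a \<bullet> b + 2 * (w \<bullet> b) \<le> (norm a + 2 * norm w) * norm b"
    using norm_cauchy_schwarz[of a b] norm_cauchy_schwarz[of w b] by (simp add: algebra_simps)
  also have "\<dots> \<le> norm b * norm b"
    using assms by (intro mult_right_mono) auto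
  finally show ?thesis by (simp add: dot_square_norm power2_eq_square)
qed

lemma compact_if_finite_outside_balls:
  fixes S :: "'a::heine_borel set"
  assumes "c \<in> S" "\<And>\<rho>. \<rho> > 0 \<Longrightarrow> finite (S - ball c \<rho>)"
  shows "compact S"
proof -
  have "bounded (ball c 1 \<union> (S - ball c 1))"
    unfolding bounded_Un using finite_imp_bounded[OF assms(2)[of 1]] by simp
  then have "bounded S"
    by (rule bounded_subset) blast
  moreover have "x \<in> S" if "x \<in> closure S" for x
  proof (cases "x = c")
    case False
    define \<rho> where "\<rho> = dist c x / 2"
    have "\<rho> > 0" using False unfolding \<rho>_def by simp
    have "closure S = closure (S \<inter> ball c \<rho>) \<union> closure (S - ball c \<rho>)"
      by (simp only: closure_Un[symmetric] Int_Diff_Un)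
    also have "\<dots> \<subseteq> cball c \<rho> \<union> (S - ball c \<rho>)"
    proof (rule Un_mono)
      show "closure (S \<inter> ball c \<rho>) \<subseteq> cball c \<rho>"
        by (rule closure_minimal) auto
      show "closure (S - ball c \<rho>) \<subseteq> S - ball c \<rho>"
        using assms(2)[OF \<open>\<rho> > 0\<close>] by (simp add: finite_imp_closed)
    qed
    moreover have "x \<notin> cball c \<rho>"
      using \<open>\<rho> > 0\<close> unfolding \<rho>_def by simp
    ultimately show ?thesis
      using that by blast
  qed (use assms(1) in simp)
  then have "closed S" using closure_subset_eq by blast
  ultimately show ?thesis by (simp add: compact_eq_bounded_closed)
qed

lemma polar_vertex_add_mem_convex_hull:
  fixes b c :: "'a::real_inner"
  assumes "b \<noteq> 0" "c \<noteq> 0" "0 \<le> b \<bullet> c"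
  shows "polar_vertex (b + c) \<in> convex hull {0, polar_vertex b, polar_vertex c}"
proof -
  define aa where "aa = (b + c) \<bullet> (b + c)"
  have aa: "aa = b \<bullet> b + c \<bullet> c + 2 * (b \<bullet> c)"
    unfolding aa_def by (simp add: inner_add_left inner_add_right inner_commute)
  have "0 < b \<bullet> b" "0 < c \<bullet> c"
    using assms(1,2) by simp_all
  then have "0 < aa" using aa assms(3) by linarith
  define \<alpha> where "\<alpha> = (b \<bullet> b) / aa"
  define \<beta> where "\<beta> = (c \<bullet> c) / aa"
  have "0 \<le> \<alpha>" "0 \<le> \<beta>"
    unfolding \<alpha>_def \<beta>_def using \<open>0 < aa\<close> by simp_all
  have "\<alpha> + \<beta> = (b \<bullet> b + c \<bullet> c) / aa"
    unfolding \<alpha>_def \<beta>_def by (simp add: add_divide_distrib)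
  also have "\<dots> \<le> 1"
    using \<open>0 < aa\<close> aa assms(3) by simp
  finally have "0 \<le> 1 - \<alpha> - \<beta>" by simp
  have "\<alpha> *\<^sub>R polar_vertex b = (2 / aa) *\<^sub>R b" "\<beta> *\<^sub>R polar_vertex c = (2 / aa) *\<^sub>R c"
    unfolding \<alpha>_def \<beta>_def polar_vertex_def using \<open>0 < b \<bullet> b\<close> \<open>0 < c \<bullet> c\<close> by simp_all
  then have "polar_vertex (b + c) = (1 - \<alpha> - \<beta>) *\<^sub>R 0 + \<alpha> *\<^sub>R polar_vertex b + \<beta> *\<^sub>R polar_vertex c"
    unfolding polar_vertex_def[of "b + c"] aa_def[symmetric] by (simp add: scaleR_add_right)
  moreover have "(1 - \<alpha> - \<beta>) + \<alpha> + \<beta> = 1" by simp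
  ultimately show ?thesis
    unfolding convex_hull_3 using \<open>0 \<le> \<alpha>\<close> \<open>0 \<le> \<beta>\<close> \<open>0 \<le> 1 - \<alpha> - \<beta>\<close> by blast
qed

definition voronoi_polar_vertices :: "'a::euclidean_space set \<Rightarrow> 'a set" where
  "voronoi_polar_vertices L = insert 0 (polar_vertex ` (L - {0}))"

lemma voronoi_polar_vertices_subset: "voronoi_polar_vertices L \<subseteq> polar_body (voronoi_cell L)"
  unfolding voronoi_polar_vertices_def
  using zero_mem_polar_body polar_vertex_mem_polar_body_voronoi_cell by blast

text \<open>The midpoint a/2 lies on the bisector of 0 and a and strictly inside the bisector
  half-spaces of all other lattice vectors.\<close>

definition strict_voronoi_relevant :: "'a::euclidean_space set \<Rightarrow> 'a \<Rightarrow> bool" where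
  "strict_voronoi_relevant L a \<longleftrightarrow> a \<in> L \<and> a \<noteq> 0 \<and> (\<forall>b\<in>L - {0, a}. a \<bullet> b < b \<bullet> b)"

context discrete_subgroup
begin

lemma compact_voronoi_polar_vertices: "compact (voronoi_polar_vertices L)"
proof (rule compact_if_finite_outside_balls)
  show "0 \<in> voronoi_polar_vertices L"
    unfolding voronoi_polar_vertices_def by simp
  fix \<rho> :: real assume "\<rho> > 0"
  have "voronoi_polar_vertices L - ball 0 \<rho> \<subseteq> polar_vertex ` (L \<inter> cball 0 (2 / \<rho>))"
  proof
    fix q assume q: "q \<in> voronoi_polar_vertices L - ball 0 \<rho>"
    with \<open>\<rho> > 0\<close> obtain a where a: "a \<in> L" "a \<noteq> 0" "q = polar_vertex a"
      unfolding voronoi_polar_vertices_def by auto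
    moreover have "norm q = 2 / norm a"
      using norm_polar_vertex a by simp
    ultimately have "\<rho> \<le> 2 / norm a"
      using q by simp
    then have "norm a \<le> 2 / \<rho>"
      using \<open>\<rho> > 0\<close> a(2) by (simp add: field_simps)
    with a show "q \<in> polar_vertex ` (L \<inter> cball 0 (2 / \<rho>))"
      by auto
  qed
  then show "finite (voronoi_polar_vertices L - ball 0 \<rho>)"
    by (rule finite_subset) (simp add: finite_Int_bounded)
qed

lemma polar_body_voronoi_cell_eq_convex_hull:
  "polar_body (voronoi_cell L) = convex hull (voronoi_polar_vertices L)"
proof
  show "convex hull voronoi_polar_vertices L \<subseteq> polar_body (voronoi_cell L)"
    using voronoi_polar_vertices_subset convex_polar_body by (rule hull_minimal)
next
  show "polar_body (voronoi_cell L) \<subseteq> convex hull voronoi_polar_vertices L"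
  proof
    fix y assume y: "y \<in> polar_body (voronoi_cell L)"
    show "y \<in> convex hull voronoi_polar_vertices L"
    proof (rule ccontr)
      assume y_notin: "y \<notin> convex hull voronoi_polar_vertices L"
      have "closed (convex hull voronoi_polar_vertices L)"
        by (simp add: compact_imp_closed compact_convex_hull compact_voronoi_polar_vertices)
      then obtain w \<beta> where w: "w \<bullet> y < \<beta>" "\<forall>z\<in>convex hull voronoi_polar_vertices L. \<beta> < w \<bullet> z"
        using separating_hyperplane_closed_point[OF convex_convex_hull _ y_notin] by blast
      have "0 \<in> convex hull voronoi_polar_vertices L"
        by (rule hull_inc) (simp add: voronoi_polar_vertices_def)
      then have "\<beta> < 0"
        using w(2) by fastforce
      have "(1 / \<beta>) *\<^sub>R w \<in> voronoi_cell L"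
        unfolding mem_voronoi_cell_iff_polar_vertex
      proof
        fix a assume "a \<in> L - {0}"
        then have "polar_vertex a \<in> voronoi_polar_vertices L"
          unfolding voronoi_polar_vertices_def by blast
        then have "\<beta> < w \<bullet> polar_vertex a"
          by (rule w(2)[rule_format, OF hull_inc])
        then show "(1 / \<beta>) *\<^sub>R w \<bullet> polar_vertex a \<le> 1"
          using \<open>\<beta> < 0\<close> by (simp add: divide_le_eq_1)
      qed
      then have "(1 / \<beta>) *\<^sub>R w \<bullet> y \<le> 1"
        using y unfolding polar_body_def by blast
      then show False
        using w(1) \<open>\<beta> < 0\<close> by (simp add: divide_le_eq_1)
    qed
  qed
qed

lemma not_extreme_point_polar_vertex:
  assumes "a \<in> L" "b \<in> L - {0, a}" "b \<bullet> b \<le> a \<bullet> b"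
  shows "\<not> polar_vertex a extreme_point_of polar_body (voronoi_cell L)"
proof
  let ?P = "polar_body (voronoi_cell L)"
  assume extreme: "polar_vertex a extreme_point_of ?P"
  have "0 \<le> b \<bullet> (a - b)"
    using assms(3) by (simp add: inner_diff_right inner_commute)
  moreover have "a - b \<in> L" "a - b \<noteq> 0"
    using assms(1,2) by (auto intro: diff_mem)
  ultimately have "polar_vertex a \<in> convex hull {0, polar_vertex b, polar_vertex (a - b)}"
    using polar_vertex_add_mem_convex_hull[of b "a - b"] assms(2) by simp
  moreover have "{0, polar_vertex b, polar_vertex (a - b)} \<subseteq> ?P"
    using assms(2) \<open>a - b \<in> L\<close> \<open>a - b \<noteq> 0\<close>
    by (simp add: zero_mem_polar_body polar_vertex_mem_polar_body_voronoi_cell)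
  ultimately have "polar_vertex a \<in> {0, polar_vertex b, polar_vertex (a - b)}"
    using extreme_point_mem_convex_hull_subset[OF convex_polar_body extreme] by blast
  then have "a = polar_vertex 0 \<or> a = b \<or> a = a - b"
    by (metis insertE empty_iff polar_vertex_polar_vertex)
  then show False
    using assms(2,3) by (auto simp: polar_vertex_def) (metis inner_gt_zero_iff not_le)
qed

lemma strict_voronoi_relevant_facet_neighbourhood:
  assumes "strict_voronoi_relevant L a"
  obtains \<eta> where "\<eta> > 0"
    "\<And>w. w \<bullet> a = 0 \<Longrightarrow> norm w \<le> \<eta> \<Longrightarrow> (1/2) *\<^sub>R a + w \<in> voronoi_cell L"
proof -
  have a: "\<And>b. b \<in> L - {0, a} \<Longrightarrow> 0 < b \<bullet> b - a \<bullet> b"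
    using assms unfolding strict_voronoi_relevant_def by auto
  define M where "M = norm a + 1"
  have "0 < M"
    unfolding M_def using norm_ge_zero[of a] by linarith
  obtain \<delta> where \<delta>: "\<delta> > 0" "\<And>b. b \<in> L \<inter> cball 0 M - {0, a} \<Longrightarrow> \<delta> \<le> b \<bullet> b - a \<bullet> b"
    using finite_positive_lower_bound[of "L \<inter> cball 0 M - {0, a}" "\<lambda>b. b \<bullet> b - a \<bullet> b"]
      finite_Int_bounded[of "cball 0 M"] a by auto
  define \<eta> where "\<eta> = min (\<delta> / (2 * M)) (1 / 2)"
  have \<eta>: "\<eta> > 0" "2 * (\<eta> * M) \<le> \<delta>" "2 * \<eta> \<le> 1"
    unfolding \<eta>_def using \<delta>(1) \<open>0 < M\<close> by (auto simp: min_def field_simps)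
  show thesis
  proof (rule that[OF \<eta>(1)])
    fix w assume w: "w \<bullet> a = 0" "norm w \<le> \<eta>"
    have "a \<bullet> b + 2 * (w \<bullet> b) \<le> b \<bullet> b" if b: "b \<in> L" for b
    proof -
      consider "b = 0 \<or> b = a" | "b \<in> L \<inter> cball 0 M - {0, a}" | "M < norm b"
        using b by force
      then show ?thesis
      proof cases
        case 1
        then show ?thesis using w(1) by (auto simp: inner_commute)
      next
        case 2
        have "2 * (w \<bullet> b) \<le> 2 * (norm w * norm b)"
          using norm_cauchy_schwarz[of w b] by simp
        also have "\<dots> \<le> 2 * (\<eta> * M)"
          using w(2) 2 \<eta>(1) by (intro mult_left_mono mult_mono) auto
        finally show ?thesis using \<delta>(2)[OF 2] \<eta>(2) by linarith
      next
        case 3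
        then show ?thesis
          using w(2) \<eta>(3) unfolding M_def by (intro inner_add_le_if_norm_le) linarith
      qed
    qed
    then show "(1/2) *\<^sub>R a + w \<in> voronoi_cell L"
      unfolding mem_voronoi_cell_iff by (simp add: inner_add_left)
  qed
qed

lemma abs_inner_polar_body_voronoi_cell_le:
  assumes "strict_voronoi_relevant L a" "x \<in> polar_body (voronoi_cell L)"
  shows "\<bar>x \<bullet> a\<bar> \<le> 2"
proof -
  obtain \<eta> where "\<eta> > 0" "\<And>w. w \<bullet> a = 0 \<Longrightarrow> norm w \<le> \<eta> \<Longrightarrow> (1/2) *\<^sub>R a + w \<in> voronoi_cell L"
    using strict_voronoi_relevant_facet_neighbourhood[OF assms(1)] by blast
  then have "(1/2) *\<^sub>R a \<in> voronoi_cell L"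
    by (metis add.right_neutral inner_zero_left norm_zero order_less_le)
  then have "(1/2) *\<^sub>R a \<bullet> x \<le> 1" "- ((1/2) *\<^sub>R a) \<bullet> x \<le> 1"
    using assms(2) uminus_mem_voronoi_cell unfolding polar_body_def by blast+
  then show ?thesis by (simp add: inner_commute abs_le_iff)
qed

lemma polar_body_voronoi_cell_inner_eq_2_imp:
  assumes "strict_voronoi_relevant L a" "x \<in> polar_body (voronoi_cell L)" "x \<bullet> a = 2"
  shows "x = polar_vertex a"
proof -
  have "a \<noteq> 0" using assms(1) unfolding strict_voronoi_relevant_def by blast
  obtain \<eta> where \<eta>: "\<eta> > 0" "\<And>w. w \<bullet> a = 0 \<Longrightarrow> norm w \<le> \<eta> \<Longrightarrow> (1/2) *\<^sub>R a + w \<in> voronoi_cell L"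
    using strict_voronoi_relevant_facet_neighbourhood[OF assms(1)] by blast
  have x_inner: "x \<bullet> u \<le> 0" if "u \<bullet> a = 0" "norm u \<le> \<eta>" for u
  proof -
    have "((1/2) *\<^sub>R a + u) \<bullet> x \<le> 1"
      using \<eta>(2)[OF that] assms(2) unfolding polar_body_def by blast
    moreover have "((1/2) *\<^sub>R a + u) \<bullet> x = (1/2) * (a \<bullet> x) + u \<bullet> x"
      by (simp add: inner_add_left)
    moreover have "a \<bullet> x = 2" "u \<bullet> x = x \<bullet> u"
      using assms(3) by (simp_all add: inner_commute)
    ultimately show ?thesis by linarith
  qed
  define w where "w = x - polar_vertex a"
  have "a \<bullet> polar_vertex a = 2"
    using \<open>a \<noteq> 0\<close> by (simp add: inner_polar_vertex)
  then have wa: "w \<bullet> a = 0"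
    unfolding w_def using assms(3) by (simp add: inner_diff_right inner_commute)
  have "x \<bullet> w = 0"
  proof (cases "w = 0")
    case False
    define u where "u = (\<eta> / norm w) *\<^sub>R w"
    have "u \<bullet> a = 0" "(- u) \<bullet> a = 0" "norm u \<le> \<eta>" "norm (- u) \<le> \<eta>"
      unfolding u_def using wa False \<eta>(1) by auto
    then have "x \<bullet> u = 0"
      using x_inner by (metis antisym inner_minus_right neg_le_0_iff_le)
    then show ?thesis
      unfolding u_def using False \<eta>(1) by simp
  qed simp
  moreover have "polar_vertex a \<bullet> w = 0"
    unfolding polar_vertex_def using wa by (simp add: inner_commute)
  ultimately have "w \<bullet> w = 0"
    unfolding w_def by (simp add: inner_diff_left)
  then show ?thesis unfolding w_def by simp
qed

end

context euclidean_lattice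
begin

lemma convex_body_polar_body_voronoi_cell: "convex_body (polar_body (voronoi_cell L))"
  by (rule convex_body_polar_body[OF bounded_voronoi_cell zero_mem_interior_voronoi_cell])

lemma extreme_point_polar_body_voronoi_cell:
  assumes "e extreme_point_of polar_body (voronoi_cell L)"
  obtains a where "strict_voronoi_relevant L a" "e = polar_vertex a"
proof -
  let ?P = "polar_body (voronoi_cell L)"
  have symmetric: "\<And>y. y \<in> ?P \<Longrightarrow> - y \<in> ?P"
    using uminus_mem_polar_body uminus_mem_voronoi_cell by blast
  obtain v where v: "v \<in> L" "v \<noteq> 0"
    using exists_nonzero by blast
  then have "polar_vertex v \<in> ?P" "polar_vertex v \<noteq> 0"
    using polar_vertex_mem_polar_body_voronoi_cell by (auto simp: polar_vertex_def)
  then have "e \<noteq> 0"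
    using assms zero_not_extreme_point_of_symmetric[OF symmetric] by blast
  moreover have "e \<in> voronoi_polar_vertices L"
    using assms extreme_point_of_convex_hull
    unfolding polar_body_voronoi_cell_eq_convex_hull by blast
  ultimately obtain a where a: "a \<in> L" "a \<noteq> 0" "e = polar_vertex a"
    unfolding voronoi_polar_vertices_def by blast
  have "a \<bullet> b < b \<bullet> b" if "b \<in> L - {0, a}" for b
    using not_extreme_point_polar_vertex[OF a(1) that] assms a(3) by force
  then show ?thesis
    using that a unfolding strict_voronoi_relevant_def by blast
qed

lemma lattice_width_polar_body_voronoi_cell_ge_4:
  "4 \<le> lattice_width (dual_lattice L) (polar_body (voronoi_cell L))"
  unfolding lattice_width_def dual_lattice_dual_lattice
proof (rule cINF_greatest)
  show "L - {0} \<noteq> {}"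
    using exists_nonzero by blast
next
  fix y assume y: "y \<in> L - {0}"
  let ?P = "polar_body (voronoi_cell L)"
  have "(polar_vertex y, - polar_vertex y) \<in> ?P \<times> ?P"
    using y polar_vertex_mem_polar_body_voronoi_cell uminus_mem_polar_body uminus_mem_voronoi_cell
    by auto
  moreover have "y \<bullet> (polar_vertex y - - polar_vertex y) = 4"
    using y by (simp add: inner_polar_vertex inner_add_right)
  moreover have "bounded ?P"
    using convex_body_polar_body_voronoi_cell unfolding convex_body_def by (simp add: compact_imp_bounded)
  ultimately show "4 \<le> (SUP p\<in>?P \<times> ?P. y \<bullet> (fst p - snd p))"
    using cSUP_upper2[OF bdd_above_inner_diff] by fastforce
qed

lemma lattice_width_subset_polar_body_lt_4:
  assumes K: "convex_body K" "K \<subseteq> polar_body (voronoi_cell L)"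
    and a: "strict_voronoi_relevant L a" "polar_vertex a \<notin> K"
  shows "lattice_width (dual_lattice L) K < 4"
proof -
  have "compact K" "K \<noteq> {}"
    using K(1) unfolding convex_body_def by auto
  define f where "f p = a \<bullet> (fst p - snd p)" for p :: "'a \<times> 'a"
  have "continuous_on (K \<times> K) f"
    unfolding f_def by (intro continuous_intros)
  moreover have "K \<times> K \<noteq> {}"
    using \<open>K \<noteq> {}\<close> by simp
  ultimately obtain r where r: "r \<in> K \<times> K" "\<And>r'. r' \<in> K \<times> K \<Longrightarrow> f r' \<le> f r"
    using continuous_attains_sup[OF compact_Times[OF \<open>compact K\<close> \<open>compact K\<close>]] by blast
  then obtain p q where pq: "p \<in> K" "q \<in> K" "\<And>r'. r' \<in> K \<times> K \<Longrightarrow> f r' \<le> f (p, q)"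
    by (cases r) auto
  have "p \<in> polar_body (voronoi_cell L)" "q \<in> polar_body (voronoi_cell L)"
    using K(2) pq(1,2) by auto
  then have "p \<bullet> a \<noteq> 2" "\<bar>p \<bullet> a\<bar> \<le> 2" "\<bar>q \<bullet> a\<bar> \<le> 2"
    using polar_body_voronoi_cell_inner_eq_2_imp[OF a(1)] abs_inner_polar_body_voronoi_cell_le[OF a(1)]
      pq(1) a(2) by auto
  then have "p \<bullet> a < 2" "- (q \<bullet> a) \<le> 2"
    by (simp_all add: abs_le_iff)
  then have "f (p, q) < 4"
    unfolding f_def by (simp add: inner_diff_right inner_commute)
  moreover have "(SUP r\<in>K \<times> K. f r) = f (p, q)"
    using pq by (intro cSup_eq_maximum) auto
  moreover have "bdd_below ((\<lambda>y. SUP r\<in>K \<times> K. y \<bullet> (fst r - snd r)) ` (L - {0}))"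
  proof (rule bdd_belowI2[of _ 0])
    fix y
    show "0 \<le> (SUP r\<in>K \<times> K. y \<bullet> (fst r - snd r))"
      using cSUP_upper2[OF bdd_above_inner_diff[OF compact_imp_bounded[OF \<open>compact K\<close>]], of "(p, p)" 0 y]
        pq(1) by simp
  qed
  then have "lattice_width (dual_lattice L) K \<le> (SUP r\<in>K \<times> K. f r)"
    using a(1) unfolding lattice_width_def dual_lattice_dual_lattice f_def strict_voronoi_relevant_def
    by (intro cINF_lower) auto
  ultimately show ?thesis by linarith
qed

lemma lattice_reduced_polar_body_voronoi_cell:
  "lattice_reduced (dual_lattice L) (polar_body (voronoi_cell L))"
  unfolding lattice_reduced_def
proof (intro conjI notI convex_body_polar_body_voronoi_cell)
  let ?P = "polar_body (voronoi_cell L)"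
  assume "\<exists>K. convex_body K \<and> K \<subset> ?P \<and> lattice_width (dual_lattice L) K = lattice_width (dual_lattice L) ?P"
  then obtain K where K: "convex_body K" "K \<subset> ?P"
    "lattice_width (dual_lattice L) K = lattice_width (dual_lattice L) ?P"
    by blast
  have "\<not> {x. x extreme_point_of ?P} \<subseteq> K"
  proof
    assume "{x. x extreme_point_of ?P} \<subseteq> K"
    then have "convex hull {x. x extreme_point_of ?P} \<subseteq> K"
      using K(1) unfolding convex_body_def by (intro hull_minimal) auto
    then show False
      using K(2) convex_body_polar_body_voronoi_cell Krein_Milman_Minkowski
      unfolding convex_body_def by auto
  qed
  then obtain e where e: "e extreme_point_of ?P" "e \<notin> K"
    by blast
  then obtain a where "strict_voronoi_relevant L a" "e = polar_vertex a"
    using extreme_point_polar_body_voronoi_cell by metis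
  then have "lattice_width (dual_lattice L) K < 4"
    using lattice_width_subset_polar_body_lt_4 K(1,2) e(2) by blast
  then show False
    using K(3) lattice_width_polar_body_voronoi_cell_ge_4 by linarith
qed

end

theorem proposition3p11:
  fixes L :: "'a::euclidean_space set"
  assumes "is_lattice L"
  shows "lattice_complete L (voronoi_cell L)
       \<and> lattice_reduced (dual_lattice L) (polar_body (voronoi_cell L))"
proof -
  interpret euclidean_lattice L
    using assms by (simp add: euclidean_lattice_iff_is_lattice)
  show ?thesis
    using lattice_complete_voronoi_cell lattice_reduced_polar_body_voronoi_cell by blast
qed

end
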